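(* Consider the algorithm AASGDA described in the context and assume (A3)–(A5). Then for every $t\ge0$, with $\mathbb{E}_t[\cdot]=\mathbb{E}[\cdot\mid(x^t,y^t,\psi^t)]$ and $\mathbb{E}_{\hat t}[\cdot]=\mathbb{E}[\cdot\mid(x^{t+1},y^t,\psi^t)]$: (a) $\|\mathbb{E}_t[G_x^t(x^t,y^t,z_x^t)]-\nabla_x\mathcal{L}(x^t,y^t)\|\le L_1\|\nabla_x\psi^t(x^t,y^t)-\nabla_x\psi(x^t,y^t)\|_F$; (b) $\mathbb{E}_t\|G_x^t(x^t,y^t,z_x^t)\|^2\le\|\mathbb{E}_t[G_x^t(x^t,y^t,z_x^t)]\|^2+(1+\|\nabla_x\psi^t(x^t,y^t)\|_F^2)\sigma^2$; (c) $\|\mathbb{E}_{\hat t}[G_y^t(x^{t+1},y^t,z_y^t)]-\nabla_y\mathcal{L}(x^{t+1},y^t)\|\le L_1\|\nabla_y\psi^t(x^{t+1},y^t)-\nabla_y\psi(x^{t+1},y^t)\|_F$; (d) $\mathbb{E}_{\hat t}\|G_y^t(x^{t+1},y^t,z_y^t)\|^2\le\|\mathbb{E}_{\hat t}[G_y^t(x^{t+1},y^t,z_y^t)]\|^2+(1+\|\nabla_y\psi^t(x^{t+1},y^t)\|_F^2)\sigma^2$.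
   Context: Let $n,m,d$ be positive integers. Let $l:\mathbb{R}^n\times\mathbb{R}^m\times\mathbb{R}^d\to\mathbb{R}$ be continuously differentiable with partial gradients $\nabla_x l,\nabla_y l,\nabla_z l$; write $\nabla_{x,z}l=(\nabla_x l,\nabla_z l)$, $\nabla_{y,z}l=(\nabla_y l,\nabla_z l)$. Let $\mathbb{P}$ be a probability measure on $\mathbb{R}^d$ and $\psi:\mathbb{R}^n\times\mathbb{R}^m\to\mathbb{R}^d$ differentiable with partial Jacobians $\nabla_x\psi,\nabla_y\psi$; $\|\cdot\|_F$ is the Frobenius norm. $\mathcal{D}(x,y)$ is the law of $\psi(x,y)+\xi$, $\xi\sim\mathbb{P}$, and $\mathcal{L}(x,y)=\mathbb{E}_{z\sim\mathcal{D}(x,y)}[l(x,y,z)]$ (assumed differentiable with $\nabla_x\mathcal{L}(x,y)=\mathbb{E}_{z\sim\mathcal{D}(x,y)}[\nabla_x l+\nabla_x\psi(x,y)^\top\nabla_z l]$ and analogously for $y$). Assumptions (constants $L_0,\ell_0,L_1,\sigma>0$): (A3) For all $(x,y)$: $\mathbb{E}_{z\sim\mathcal{D}(x,y)}\|\nabla_x l(x,y,z)\|\le L_1$, $\mathbb{E}_{z\sim\mathcal{D}(x,y)}\|\nabla_z l(x,y,z)\|\le L_1$. (A4) For all $(x,y)$: $\mathbb{E}_{z\sim\mathcal{D}(x,y)}\|\nabla_{x,z}l-\mathbb{E}\nabla_{x,z}l\|^2\le\sigma^2$ and $\mathbb{E}_{z\sim\mathcal{D}(x,y)}\|\nabla_{y,z}l-\mathbb{E}\nabla_{y,z}l\|^2\le\sigma^2$.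 (A5) $\psi$ is $L_0$-Lipschitz and $\ell_0$-smooth. AASGDA (stepsizes $\eta_x,\eta_y>0$): start from $x^0\in\mathbb{R}^n$, $y^0\in\mathbb{R}^m$, initial estimate $\psi^0$. At iteration $t$, given $(x^t,y^t)$ and the current estimate $\psi^t$ (a differentiable map, possibly random, determined by the history), with $G_x^t(x,y,z)=\nabla_x l(x,y,z)+\nabla_x\psi^t(x,y)^\top\nabla_z l(x,y,z)$ and $G_y^t(x,y,z)=\nabla_y l(x,y,z)+\nabla_y\psi^t(x,y)^\top\nabla_z l(x,y,z)$: draw $z_x^t$ with law $\mathcal{D}(x^t,y^t)$ conditionally on the past, set $x^{t+1}=x^t-\eta_x G_x^t(x^t,y^t,z_x^t)$; draw $z_y^t$ with law $\mathcal{D}(x^{t+1},y^t)$ conditionally on the past (including $x^{t+1}$), set $y^{t+1}=y^t+\eta_y G_y^t(x^{t+1},y^t,z_y^t)$; then form $\psi^{t+1}$ by an arbitrary estimation rule. *)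

theory Defs
  imports "HOL-Probability.Probability"
begin

definition frob :: "real^'n^'d \<Rightarrow> real" where
  "frob A = sqrt (\<Sum>i\<in>UNIV. \<Sum>j\<in>UNIV. (A $ i $ j)^2)"

definition Dlaw :: "(real^'d) measure \<Rightarrow> (real^'n \<Rightarrow> real^'m \<Rightarrow> real^'d)
    \<Rightarrow> real^'n \<Rightarrow> real^'m \<Rightarrow> (real^'d) measure" where
  "Dlaw P \<psi> x y = distr P borel (\<lambda>\<xi>. \<psi> x y + \<xi>)"

end

theory Submission
  imports Defs
begin

(*
  Conditioning on the history fixes the point (x, y), the Jacobian A of the current estimate and
  the Jacobian J of psi, so each claim concerns one law D = D(x, y) and the random vector
  X = g + A^T h, where g and h are the partial gradients of l in the decision variable and in z.
  By linearity E X - E(g + J^T h) = (A - J)^T E h, whose norm is at most ||A - J||_F E||h||.  For the second moment,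
  E||X||^2 = ||E X||^2 + E||X - E X||^2, and X - E X = (g - E g) + A^T (h - E h) is bounded by
  Cauchy-Schwarz pointwise by (1 + ||A||_F^2) (||g - E g||^2 + ||h - E h||^2), whose expectation is
  at most sigma^2 by (A4).  The finite variance in (A4) also yields the integrability of g and h.
*)

lemma frob_nonneg: "0 \<le> frob A"
  unfolding frob_def by (intro real_sqrt_ge_zero sum_nonneg) simp

lemma frob_power2: "(frob A)\<^sup>2 = (\<Sum>i\<in>UNIV. \<Sum>j\<in>UNIV. (A $ i $ j)\<^sup>2)"
  unfolding frob_def by (intro real_sqrt_pow2 sum_nonneg) simp

lemma frob_transpose: "frob (transpose A) = frob A"
proof -
  have "(\<Sum>i\<in>UNIV. \<Sum>j\<in>UNIV. (transpose A $ i $ j)\<^sup>2) = (\<Sum>i\<in>UNIV. \<Sum>j\<in>UNIV. (A $ i $ j)\<^sup>2)"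
    unfolding transpose_def vec_lambda_beta by (rule sum.swap)
  then show ?thesis
    unfolding frob_def by simp
qed

lemma transpose_diff: "transpose (A - B) = transpose A - (transpose B :: 'a::ab_group_add^'n^'m)"
  by (simp add: transpose_def vec_eq_iff)

lemma power2_norm_cart: "(norm x)\<^sup>2 = (\<Sum>i\<in>UNIV. (x $ i)\<^sup>2)" for x :: "real^'n"
  unfolding power2_norm_eq_inner inner_vec_def by (simp add: power2_eq_square)

lemma norm_matrix_vector_mult_le_frob: "norm (A *v v) \<le> frob A * norm v"
  for A :: "real^'n^'m"
proof (rule power2_le_imp_le)
  have "(norm (A *v v))\<^sup>2 = (\<Sum>i\<in>UNIV. ((A *v v) $ i)\<^sup>2)"
    by (rule power2_norm_cart)
  also have "\<dots> \<le> (\<Sum>i\<in>UNIV. (norm (A $ i))\<^sup>2 * (norm v)\<^sup>2)"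
  proof (rule sum_mono)
    fix i
    have "\<bar>(A *v v) $ i\<bar> \<le> norm (A $ i) * norm v"
      by (simp add: matrix_mult_dot Cauchy_Schwarz_ineq2)
    then have "\<bar>(A *v v) $ i\<bar>\<^sup>2 \<le> (norm (A $ i) * norm v)\<^sup>2"
      by (rule power_mono) simp
    then show "((A *v v) $ i)\<^sup>2 \<le> (norm (A $ i))\<^sup>2 * (norm v)\<^sup>2"
      by (simp only: power2_abs power_mult_distrib)
  qed
  also have "\<dots> = (\<Sum>i\<in>UNIV. (norm (A $ i))\<^sup>2) * (norm v)\<^sup>2"
    by (rule sum_distrib_right[symmetric])
  also have "\<dots> = (frob A * norm v)\<^sup>2"
    unfolding frob_power2 power_mult_distrib power2_norm_cart[of "A $ _"] ..
  finally show "(norm (A *v v))\<^sup>2 \<le> (frob A * norm v)\<^sup>2" .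
  show "0 \<le> frob A * norm v"
    by (simp add: frob_nonneg)
qed

lemma norm_transpose_mult_le_frob: "norm (transpose A *v v) \<le> frob A * norm v"
  for A :: "real^'n^'m"
  using norm_matrix_vector_mult_le_frob[of "transpose A" v]
  by (simp only: frob_transpose)

lemma power2_add_mult_le: "(a + F * b)\<^sup>2 \<le> (1 + F\<^sup>2) * (a\<^sup>2 + b\<^sup>2)" for a b F :: real
proof -
  have "(1 + F\<^sup>2) * (a\<^sup>2 + b\<^sup>2) - (a + F * b)\<^sup>2 = (F * a - b)\<^sup>2"
    by (simp add: power2_eq_square algebra_simps)
  then show ?thesis
    using zero_le_power2[of "F * a - b"] by linarith
qed

lemma (in finite_measure) nn_integral_norm_diff_power2_finite_imp_integrable:
  fixes f :: "'a \<Rightarrow> 'b::{banach, second_countable_topology}"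
  assumes [measurable]: "f \<in> borel_measurable M"
    and finite: "(\<integral>\<^sup>+x. ennreal ((norm (f x - c))\<^sup>2) \<partial>M) < \<top>"
  shows "integrable M f"
proof -
  have "(\<integral>\<^sup>+x. ennreal (norm (f x - c)) \<partial>M)\<^sup>2
      \<le> (\<integral>\<^sup>+x. ennreal ((norm (f x - c))\<^sup>2) \<partial>M) * emeasure M (space M)"
    using Cauchy_Schwarz_nn_integral[of "\<lambda>x. ennreal (norm (f x - c))" M "\<lambda>_. 1"]
    by (simp add: ennreal_power)
  also have "\<dots> < \<top>"
    using finite by (simp add: ennreal_mult_eq_top_iff less_top[symmetric])
  finally have "integrable M (\<lambda>x. f x - c)"
    by (simp add: integrable_iff_bounded power_less_top_ennreal)
  then have "integrable M (\<lambda>x. (f x - c) + c)"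
    by (rule Bochner_Integration.integrable_add) simp
  then show ?thesis
    by simp
qed

lemma (in finite_measure) nn_integral_sum_norm_diff_power2_finite_imp_integrable:
  fixes f :: "'a \<Rightarrow> 'b::{banach, second_countable_topology}"
    and g :: "'a \<Rightarrow> 'c::{banach, second_countable_topology}"
  assumes "f \<in> borel_measurable M" "g \<in> borel_measurable M"
    and finite: "(\<integral>\<^sup>+x. ennreal ((norm (f x - c))\<^sup>2 + (norm (g x - d))\<^sup>2) \<partial>M) < \<top>"
  shows "integrable M f" "integrable M g"
proof -
  have "(\<integral>\<^sup>+x. ennreal ((norm (f x - c))\<^sup>2) \<partial>M) < \<top>"
    by (rule le_less_trans[OF nn_integral_mono finite]) (simp add: ennreal_leI)
  then show "integrable M f"
    by (rule nn_integral_norm_diff_power2_finite_imp_integrable[OF assms(1)])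
  have "(\<integral>\<^sup>+x. ennreal ((norm (g x - d))\<^sup>2) \<partial>M) < \<top>"
    by (rule le_less_trans[OF nn_integral_mono finite]) (simp add: ennreal_leI)
  then show "integrable M g"
    by (rule nn_integral_norm_diff_power2_finite_imp_integrable[OF assms(2)])
qed

lemma (in finite_measure) integrable_norm_diff_power2:
  fixes X :: "'a \<Rightarrow> 'b::{banach, second_countable_topology}"
  assumes [measurable]: "X \<in> borel_measurable M"
    and square: "integrable M (\<lambda>z. (norm (X z))\<^sup>2)"
  shows "integrable M (\<lambda>z. (norm (X z - c))\<^sup>2)"
proof -
  have dominating: "integrable M (\<lambda>z. 2 * (norm (X z))\<^sup>2 + 2 * (norm c)\<^sup>2)"
    using square by (intro Bochner_Integration.integrable_add integrable_mult_right integrable_const)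
  have bound: "(norm (X z - c))\<^sup>2 \<le> 2 * (norm (X z))\<^sup>2 + 2 * (norm c)\<^sup>2" for z
  proof -
    have "(norm (X z - c))\<^sup>2 \<le> (norm (X z) + norm c)\<^sup>2"
      by (rule power_mono[OF norm_triangle_ineq4]) simp
    then show ?thesis
      using zero_le_power2[of "norm (X z) - norm c"] by (simp add: power2_eq_square algebra_simps)
  qed
  show ?thesis
    by (rule Bochner_Integration.integrable_bound[OF dominating]) (auto intro: order_trans[OF bound])
qed

lemma (in prob_space) nn_integral_norm_power2_eq_bias_variance:
  fixes X :: "'a \<Rightarrow> 'b::{real_inner, banach, second_countable_topology}"
  assumes X: "integrable M X"
  shows "(\<integral>\<^sup>+z. ennreal ((norm (X z))\<^sup>2) \<partial>M)
       = ennreal ((norm (expectation X))\<^sup>2) + (\<integral>\<^sup>+z. ennreal ((norm (X z - expectation X))\<^sup>2) \<partial>M)"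
proof -
  define c where "c = expectation X"
  have [measurable]: "X \<in> borel_measurable M"
    using X by (rule borel_measurable_integrable)
  show ?thesis
  proof (cases "(\<integral>\<^sup>+z. ennreal ((norm (X z - c))\<^sup>2) \<partial>M) < \<top>")
    case True
    then have int_var: "integrable M (\<lambda>z. (norm (X z - c))\<^sup>2)"
      by (simp add: integrable_iff_bounded)
    have int_cross: "integrable M (\<lambda>z. c \<bullet> (X z - c))"
      using X by (intro integrable_inner_right Bochner_Integration.integrable_diff integrable_const)
    have cross: "(\<integral>z. c \<bullet> (X z - c) \<partial>M) = 0"
      using X by (simp add: Bochner_Integration.integral_diff c_def prob_space)
    have expand: "(norm (X z))\<^sup>2 = (norm c)\<^sup>2 + 2 * (c \<bullet> (X z - c)) + (norm (X z - c))\<^sup>2" for z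
      unfolding power2_norm_eq_inner by (simp add: inner_diff_left inner_diff_right inner_commute)
    have int_sq: "integrable M (\<lambda>z. (norm (X z))\<^sup>2)"
      unfolding expand using int_cross int_var by simp
    have "(\<integral>z. (norm (X z))\<^sup>2 \<partial>M) = (norm c)\<^sup>2 + (\<integral>z. (norm (X z - c))\<^sup>2 \<partial>M)"
      unfolding expand using int_cross int_var cross by (simp add: prob_space)
    then have "(\<integral>\<^sup>+z. ennreal ((norm (X z))\<^sup>2) \<partial>M)
        = ennreal ((norm c)\<^sup>2) + ennreal (\<integral>z. (norm (X z - c))\<^sup>2 \<partial>M)"
      by (simp add: nn_integral_eq_integral[OF int_sq] ennreal_plus)
    also have "\<dots> = ennreal ((norm c)\<^sup>2) + (\<integral>\<^sup>+z. ennreal ((norm (X z - c))\<^sup>2) \<partial>M)"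
      by (simp add: nn_integral_eq_integral[OF int_var])
    finally show ?thesis
      by (simp only: c_def)
  next
    case False
    have "(\<integral>\<^sup>+z. ennreal ((norm (X z))\<^sup>2) \<partial>M) = \<top>"
    proof (rule ccontr)
      assume "(\<integral>\<^sup>+z. ennreal ((norm (X z))\<^sup>2) \<partial>M) \<noteq> \<top>"
      then have "integrable M (\<lambda>z. (norm (X z))\<^sup>2)"
        by (simp add: integrable_iff_bounded less_top[symmetric])
      then have "integrable M (\<lambda>z. (norm (X z - c))\<^sup>2)"
        by (rule integrable_norm_diff_power2[rotated]) measurable
      with False show False
        by (simp add: integrable_iff_bounded)
    qed
    with False show ?thesis
      by (simp add: c_def less_top[symmetric])
  qed
qed

lemma integral_add_transpose_mult:
  fixes g :: "'a \<Rightarrow> real^'k" and h :: "'a \<Rightarrow> real^'d" and A :: "real^'k^'d"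
  assumes g: "integrable M g" and h: "integrable M h"
  shows "(\<integral>z. g z + transpose A *v h z \<partial>M) = (\<integral>z. g z \<partial>M) + transpose A *v (\<integral>z. h z \<partial>M)"
proof -
  have "integrable M (\<lambda>z. transpose A *v h z)"
    by (rule integrable_bounded_linear[OF matrix_vector_mul_bounded_linear h])
  then show ?thesis
    by (simp only: Bochner_Integration.integral_add[OF g]
        integral_bounded_linear[OF matrix_vector_mul_bounded_linear h])
qed

lemma norm_integral_add_transpose_mult_diff_le:
  fixes g :: "'a \<Rightarrow> real^'k" and h :: "'a \<Rightarrow> real^'d" and A B :: "real^'k^'d"
  assumes g: "integrable M g" and h: "integrable M h"
    and mean: "norm (\<integral>z. h z \<partial>M) \<le> L"
  shows "norm ((\<integral>z. g z + transpose A *v h z \<partial>M) - (\<integral>z. g z + transpose B *v h z \<partial>M))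
    \<le> L * frob (A - B)"
proof -
  have "(\<integral>z. g z + transpose A *v h z \<partial>M) - (\<integral>z. g z + transpose B *v h z \<partial>M)
      = transpose (A - B) *v (\<integral>z. h z \<partial>M)"
    unfolding integral_add_transpose_mult[OF g h] transpose_diff matrix_vector_mult_diff_rdistrib
    by simp
  moreover have "norm (transpose (A - B) *v (\<integral>z. h z \<partial>M)) \<le> frob (A - B) * norm (\<integral>z. h z \<partial>M)"
    by (rule norm_transpose_mult_le_frob)
  moreover have "frob (A - B) * norm (\<integral>z. h z \<partial>M) \<le> frob (A - B) * L"
    by (rule mult_left_mono[OF mean frob_nonneg])
  ultimately show ?thesis
    by (simp add: mult.commute)
qed

lemma nn_integral_norm_centered_add_transpose_mult_le:
  fixes g :: "'a \<Rightarrow> real^'k" and h :: "'a \<Rightarrow> real^'d" and A :: "real^'k^'d"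
  assumes g: "integrable M g" and h: "integrable M h"
  shows "(\<integral>\<^sup>+z. ennreal ((norm (g z + transpose A *v h z - (\<integral>w. g w + transpose A *v h w \<partial>M)))\<^sup>2) \<partial>M)
    \<le> ennreal (1 + (frob A)\<^sup>2)
       * (\<integral>\<^sup>+z. ennreal ((norm (g z - (\<integral>w. g w \<partial>M)))\<^sup>2 + (norm (h z - (\<integral>w. h w \<partial>M)))\<^sup>2) \<partial>M)"
proof -
  have [measurable]: "g \<in> borel_measurable M" "h \<in> borel_measurable M"
    using g h by (simp_all add: borel_measurable_integrable)
  have pointwise: "ennreal ((norm (g z + transpose A *v h z - (\<integral>w. g w + transpose A *v h w \<partial>M)))\<^sup>2)
      \<le> ennreal (1 + (frob A)\<^sup>2)
        * ennreal ((norm (g z - (\<integral>w. g w \<partial>M)))\<^sup>2 + (norm (h z - (\<integral>w. h w \<partial>M)))\<^sup>2)"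
    for z
  proof -
    define u where "u = g z - (\<integral>w. g w \<partial>M)"
    define v where "v = h z - (\<integral>w. h w \<partial>M)"
    have "g z + transpose A *v h z - (\<integral>w. g w + transpose A *v h w \<partial>M) = u + transpose A *v v"
      unfolding integral_add_transpose_mult[OF g h] u_def v_def matrix_vector_mult_diff_distrib
      by (simp add: algebra_simps)
    also have "norm (u + transpose A *v v) \<le> norm u + frob A * norm v"
      by (rule order_trans[OF norm_triangle_ineq add_left_mono[OF norm_transpose_mult_le_frob]])
    finally have "(norm (g z + transpose A *v h z - (\<integral>w. g w + transpose A *v h w \<partial>M)))\<^sup>2
        \<le> (norm u + frob A * norm v)\<^sup>2"
      by (rule power_mono) simp
    also have "\<dots> \<le> (1 + (frob A)\<^sup>2) * ((norm u)\<^sup>2 + (norm v)\<^sup>2)"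
      by (rule power2_add_mult_le)
    finally have "ennreal ((norm (g z + transpose A *v h z - (\<integral>w. g w + transpose A *v h w \<partial>M)))\<^sup>2)
        \<le> ennreal ((1 + (frob A)\<^sup>2) * ((norm u)\<^sup>2 + (norm v)\<^sup>2))"
      by (rule ennreal_leI)
    also have "\<dots> = ennreal (1 + (frob A)\<^sup>2) * ennreal ((norm u)\<^sup>2 + (norm v)\<^sup>2)"
      by (rule ennreal_mult') simp
    finally show ?thesis
      unfolding u_def v_def .
  qed
  have "(\<integral>\<^sup>+z. ennreal ((norm (g z + transpose A *v h z - (\<integral>w. g w + transpose A *v h w \<partial>M)))\<^sup>2) \<partial>M)
    \<le> (\<integral>\<^sup>+z. ennreal (1 + (frob A)\<^sup>2)
        * ennreal ((norm (g z - (\<integral>w. g w \<partial>M)))\<^sup>2 + (norm (h z - (\<integral>w. h w \<partial>M)))\<^sup>2) \<partial>M)"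
    by (rule nn_integral_mono) (rule pointwise)
  also have "\<dots> = ennreal (1 + (frob A)\<^sup>2)
       * (\<integral>\<^sup>+z. ennreal ((norm (g z - (\<integral>w. g w \<partial>M)))\<^sup>2 + (norm (h z - (\<integral>w. h w \<partial>M)))\<^sup>2) \<partial>M)"
    by (rule nn_integral_cmult) measurable
  finally show ?thesis .
qed

lemma (in prob_space) nn_integral_norm_power2_add_transpose_mult_le:
  fixes g :: "'a \<Rightarrow> real^'k" and h :: "'a \<Rightarrow> real^'d" and A :: "real^'k^'d"
  assumes g: "integrable M g" and h: "integrable M h"
    and variance: "(\<integral>\<^sup>+z. ennreal ((norm (g z - expectation g))\<^sup>2 + (norm (h z - expectation h))\<^sup>2) \<partial>M)
      \<le> ennreal (\<sigma>\<^sup>2)"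
  shows "(\<integral>\<^sup>+z. ennreal ((norm (g z + transpose A *v h z))\<^sup>2) \<partial>M)
    \<le> ennreal ((norm (\<integral>z. g z + transpose A *v h z \<partial>M))\<^sup>2 + (1 + (frob A)\<^sup>2) * \<sigma>\<^sup>2)"
proof -
  have "integrable M (\<lambda>z. g z + transpose A *v h z)"
    by (intro Bochner_Integration.integrable_add g
        integrable_bounded_linear[OF matrix_vector_mul_bounded_linear h])
  then have "(\<integral>\<^sup>+z. ennreal ((norm (g z + transpose A *v h z))\<^sup>2) \<partial>M)
      = ennreal ((norm (\<integral>z. g z + transpose A *v h z \<partial>M))\<^sup>2)
        + (\<integral>\<^sup>+z. ennreal ((norm (g z + transpose A *v h z - (\<integral>w. g w + transpose A *v h w \<partial>M)))\<^sup>2) \<partial>M)"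
    by (rule nn_integral_norm_power2_eq_bias_variance)
  also have "\<dots> \<le> ennreal ((norm (\<integral>z. g z + transpose A *v h z \<partial>M))\<^sup>2)
        + ennreal (1 + (frob A)\<^sup>2) * ennreal (\<sigma>\<^sup>2)"
    using nn_integral_norm_centered_add_transpose_mult_le[OF g h, of A] variance
    by (intro add_left_mono) (meson order_trans mult_left_mono zero_le)
  also have "\<dots> = ennreal ((norm (\<integral>z. g z + transpose A *v h z \<partial>M))\<^sup>2 + (1 + (frob A)\<^sup>2) * \<sigma>\<^sup>2)"
    by (simp add: ennreal_mult ennreal_plus)
  finally show ?thesis .
qed

lemma sets_Dlaw: "sets (Dlaw P \<psi> x y) = sets borel"
  by (simp add: Dlaw_def)

lemma prob_space_Dlaw:
  assumes "prob_space P" and "sets P = sets borel"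
  shows "prob_space (Dlaw P \<psi> x y)"
proof -
  have "(\<lambda>\<xi>. \<psi> x y + \<xi>) \<in> measurable P borel"
    unfolding measurable_cong_sets[OF assms(2) refl] by measurable
  then show ?thesis
    unfolding Dlaw_def by (rule prob_space.prob_space_distr[OF assms(1)])
qed

lemma borel_measurable_Dlaw_slice:
  fixes f :: "real^'n \<Rightarrow> real^'m \<Rightarrow> real^'d \<Rightarrow> 'b::topological_space"
  assumes "continuous_on UNIV (\<lambda>(a, b, c). f a b c)"
  shows "f x y \<in> borel_measurable (Dlaw P \<psi> x y)"
proof -
  have "continuous_on UNIV ((\<lambda>(a, b, c). f a b c) \<circ> (\<lambda>z. (x, y, z)))"
    by (intro continuous_on_compose continuous_intros continuous_on_subset[OF assms]) auto
  then have "continuous_on UNIV (f x y)"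
    by (simp add: o_def)
  then show ?thesis
    unfolding measurable_cong_sets[OF sets_Dlaw refl] by (rule borel_measurable_continuous_onI)
qed

theorem lemma2p2:
  fixes l :: "real^'n \<Rightarrow> real^'m \<Rightarrow> real^'d \<Rightarrow> real"
    and gx :: "real^'n \<Rightarrow> real^'m \<Rightarrow> real^'d \<Rightarrow> real^'n"
    and gy :: "real^'n \<Rightarrow> real^'m \<Rightarrow> real^'d \<Rightarrow> real^'m"
    and gz :: "real^'n \<Rightarrow> real^'m \<Rightarrow> real^'d \<Rightarrow> real^'d"
    and P :: "(real^'d) measure"
    and \<psi> :: "real^'n \<Rightarrow> real^'m \<Rightarrow> real^'d"
    and Jx :: "real^'n \<Rightarrow> real^'m \<Rightarrow> real^'n^'d"
    and Jy :: "real^'n \<Rightarrow> real^'m \<Rightarrow> real^'m^'d"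
    and gLx :: "real^'n \<Rightarrow> real^'m \<Rightarrow> real^'n"
    and gLy :: "real^'n \<Rightarrow> real^'m \<Rightarrow> real^'m"
    and \<psi>t :: "real^'n \<Rightarrow> real^'m \<Rightarrow> real^'d"
    and Jtx :: "real^'n \<Rightarrow> real^'m \<Rightarrow> real^'n^'d"
    and Jty :: "real^'n \<Rightarrow> real^'m \<Rightarrow> real^'m^'d"
    and L0 ell0 L1 \<sigma> :: real
    and x :: "real^'n" and y :: "real^'m"
  assumes consts_pos: "L0 > 0" "ell0 > 0" "L1 > 0" "\<sigma> > 0"
    \<comment> \<open>l is continuously differentiable with partial gradients gx, gy, gz\<close>
    and l_dx: "\<And>a b c. ((\<lambda>u. l u b c) has_derivative (\<lambda>h. gx a b c \<bullet> h)) (at a)"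
    and l_dy: "\<And>a b c. ((\<lambda>v. l a v c) has_derivative (\<lambda>h. gy a b c \<bullet> h)) (at b)"
    and l_dz: "\<And>a b c. ((\<lambda>w. l a b w) has_derivative (\<lambda>h. gz a b c \<bullet> h)) (at c)"
    and gx_cont: "continuous_on UNIV (\<lambda>(a,b,c). gx a b c)"
    and gy_cont: "continuous_on UNIV (\<lambda>(a,b,c). gy a b c)"
    and gz_cont: "continuous_on UNIV (\<lambda>(a,b,c). gz a b c)"
    \<comment> \<open>P is a probability measure on R^d\<close>
    and P_prob: "prob_space P" and P_sets: "sets P = sets borel"
    \<comment> \<open>psi is differentiable with partial Jacobians Jx, Jy\<close>
    and psi_dx: "\<And>a b. ((\<lambda>u. \<psi> u b) has_derivative (\<lambda>h. Jx a b *v h)) (at a)"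
    and psi_dy: "\<And>a b. ((\<lambda>v. \<psi> a v) has_derivative (\<lambda>h. Jy a b *v h)) (at b)"
    \<comment> \<open>L(x,y) = E_{z ~ D(x,y)} l(x,y,z) is differentiable with the stated gradients\<close>
    and L_dx: "\<And>a b. ((\<lambda>u. \<integral>z. l u b z \<partial>(Dlaw P \<psi> u b)) has_derivative (\<lambda>h. gLx a b \<bullet> h)) (at a)"
    and L_dy: "\<And>a b. ((\<lambda>v. \<integral>z. l a v z \<partial>(Dlaw P \<psi> a v)) has_derivative (\<lambda>h. gLy a b \<bullet> h)) (at b)"
    and gLx_eq: "\<And>a b. gLx a b = (\<integral>z. gx a b z + transpose (Jx a b) *v gz a b z \<partial>(Dlaw P \<psi> a b))"
    and gLy_eq: "\<And>a b. gLy a b = (\<integral>z. gy a b z + transpose (Jy a b) *v gz a b z \<partial>(Dlaw P \<psi> a b))"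
    \<comment> \<open>(A3)\<close>
    and A3x: "\<And>a b. (\<integral>\<^sup>+z. ennreal (norm (gx a b z)) \<partial>(Dlaw P \<psi> a b)) \<le> ennreal L1"
    and A3z: "\<And>a b. (\<integral>\<^sup>+z. ennreal (norm (gz a b z)) \<partial>(Dlaw P \<psi> a b)) \<le> ennreal L1"
    \<comment> \<open>(A4)\<close>
    and A4xz: "\<And>a b. (\<integral>\<^sup>+z. ennreal ((norm (gx a b z - (\<integral>w. gx a b w \<partial>(Dlaw P \<psi> a b))))\<^sup>2
                 + (norm (gz a b z - (\<integral>w. gz a b w \<partial>(Dlaw P \<psi> a b))))\<^sup>2) \<partial>(Dlaw P \<psi> a b))
               \<le> ennreal (\<sigma>\<^sup>2)"
    and A4yz: "\<And>a b. (\<integral>\<^sup>+z. ennreal ((norm (gy a b z - (\<integral>w. gy a b w \<partial>(Dlaw P \<psi> a b))))\<^sup>2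
                 + (norm (gz a b z - (\<integral>w. gz a b w \<partial>(Dlaw P \<psi> a b))))\<^sup>2) \<partial>(Dlaw P \<psi> a b))
               \<le> ennreal (\<sigma>\<^sup>2)"
    \<comment> \<open>(A5): psi is L0-Lipschitz and l0-smooth (Jacobian l0-Lipschitz in Frobenius norm)\<close>
    and A5_lip: "\<And>a b a' b'. norm (\<psi> a b - \<psi> a' b') \<le> L0 * norm ((a, b) - (a', b'))"
    and A5_smooth: "\<And>a b a' b'. sqrt ((frob (Jx a b - Jx a' b'))\<^sup>2 + (frob (Jy a b - Jy a' b'))\<^sup>2)
                     \<le> ell0 * norm ((a, b) - (a', b'))"
    \<comment> \<open>the current estimate psi^t: a differentiable map with partial Jacobians Jtx, Jty\<close>
    and psit_dx: "\<And>a b. ((\<lambda>u. \<psi>t u b) has_derivative (\<lambda>h. Jtx a b *v h)) (at a)"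
    and psit_dy: "\<And>a b. ((\<lambda>v. \<psi>t a v) has_derivative (\<lambda>h. Jty a b *v h)) (at b)"
  shows
    "norm ((\<integral>z. gx x y z + transpose (Jtx x y) *v gz x y z \<partial>(Dlaw P \<psi> x y)) - gLx x y)
       \<le> L1 * frob (Jtx x y - Jx x y)
     \<and> (\<integral>\<^sup>+z. ennreal ((norm (gx x y z + transpose (Jtx x y) *v gz x y z))\<^sup>2) \<partial>(Dlaw P \<psi> x y))
       \<le> ennreal ((norm (\<integral>z. gx x y z + transpose (Jtx x y) *v gz x y z \<partial>(Dlaw P \<psi> x y)))\<^sup>2
                  + (1 + (frob (Jtx x y))\<^sup>2) * \<sigma>\<^sup>2)
     \<and> norm ((\<integral>z. gy x y z + transpose (Jty x y) *v gz x y z \<partial>(Dlaw P \<psi> x y)) - gLy x y)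
       \<le> L1 * frob (Jty x y - Jy x y)
     \<and> (\<integral>\<^sup>+z. ennreal ((norm (gy x y z + transpose (Jty x y) *v gz x y z))\<^sup>2) \<partial>(Dlaw P \<psi> x y))
       \<le> ennreal ((norm (\<integral>z. gy x y z + transpose (Jty x y) *v gz x y z \<partial>(Dlaw P \<psi> x y)))\<^sup>2
                  + (1 + (frob (Jty x y))\<^sup>2) * \<sigma>\<^sup>2)"
proof -
  define D where "D = Dlaw P \<psi> x y"
  interpret D: prob_space D
    unfolding D_def using P_prob P_sets by (rule prob_space_Dlaw)
  have measurable: "gx x y \<in> borel_measurable D" "gy x y \<in> borel_measurable D"
    "gz x y \<in> borel_measurable D"
    unfolding D_def using gx_cont gy_cont gz_cont by (simp_all add: borel_measurable_Dlaw_slice)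
  note variance_x = A4xz[of x y, folded D_def] and variance_y = A4yz[of x y, folded D_def]
  note integrable_xz = D.nn_integral_sum_norm_diff_power2_finite_imp_integrable
      [OF measurable(1,3) le_less_trans[OF variance_x ennreal_less_top]]
  note integrable_yz = D.nn_integral_sum_norm_diff_power2_finite_imp_integrable
      [OF measurable(2,3) le_less_trans[OF variance_y ennreal_less_top]]
  have "ennreal (norm (\<integral>z. gz x y z \<partial>D)) \<le> ennreal L1"
    using integral_norm_bound_ennreal[OF integrable_xz(2)] A3z[of x y, folded D_def] by (rule order_trans)
  then have mean_z: "norm (\<integral>z. gz x y z \<partial>D) \<le> L1"
    using consts_pos(3) by simp
  show ?thesis
    unfolding gLx_eq gLy_eq D_def[symmetric]
    using norm_integral_add_transpose_mult_diff_le[OF integrable_xz mean_z]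
      norm_integral_add_transpose_mult_diff_le[OF integrable_yz mean_z]
      D.nn_integral_norm_power2_add_transpose_mult_le[OF integrable_xz variance_x]
      D.nn_integral_norm_power2_add_transpose_mult_le[OF integrable_yz variance_y]
    by blast
qed

end
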